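(* Let $(\mathfrak g,[\cdot,\cdot],\varepsilon,B)$ be a quadratic color Lie algebra and let $\theta$ be an even, invertible, $B$-symmetric element of the centroid of $\mathfrak g$. Define $[x,y]_1^\theta=[\theta(x),y]$, $[x,y]_2^\theta=[\theta(x),\theta(y)]$ and $B_\theta(x,y)=B(\theta(x),y)$. Then $(\mathfrak g,[\cdot,\cdot]_1^\theta,\theta,\varepsilon,B_\theta)$ and $(\mathfrak g,[\cdot,\cdot]_2^\theta,\theta,\varepsilon,B_\theta)$ are quadratic color Hom-Lie algebras.
   Context: $\mathbb K$ is a field of characteristic zero and $\Gamma$ an abelian group. A bicharacter is a map $\varepsilon:\Gamma\times\Gamma\to\mathbb K\setminus\{0\}$ with $\varepsilon(a,b)\varepsilon(b,a)=1$, $\varepsilon(a,b+c)=\varepsilon(a,b)\varepsilon(a,c)$, $\varepsilon(a+b,c)=\varepsilon(a,c)\varepsilon(b,c)$; for homogeneous $x,y$, $\varepsilon(x,y)$ means $\varepsilon(\deg x,\deg y)$. A color Hom-Lie algebra $(\mathfrak g,[\cdot,\cdot],\alpha,\varepsilon)$ is a $\Gamma$-graded vector space with even (degree-preserving) bilinear bracket and even linear $\alpha$ such that $[x,y]=-\varepsilon(x,y)[y,x]$ and $\varepsilon(z,x)[\alpha(x),[y,z]]+\varepsilon(x,y)[\alpha(y),[z,x]]+\varepsilon(y,z)[\alpha(z),[x,y]]=0$ for homogeneous $x,y,z$; a color Lie algebra $(\mathfrak g,[\cdot,\cdot],\varepsilon)$ is the case $\alpha=\mathrm{id}$. A color Hom-Lie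 algebra is quadratic, written $(\mathfrak g,[\cdot,\cdot],\alpha,\varepsilon,B)$, if $B$ is a nondegenerate bilinear form which is $\varepsilon$-symmetric ($B(x,y)=\varepsilon(x,y)B(y,x)$), invariant ($B([x,y],z)=B(x,[y,z])$), and $B(\alpha(x),y)=B(x,\alpha(y))$; a quadratic color Lie algebra is the case $\alpha=\mathrm{id}$. The centroid consists of linear maps $\theta$ with $\theta([x,y])=[\theta(x),y]=\varepsilon(\theta,x)[x,\theta(y)]$; $\theta$ is $B$-symmetric if $B(\theta(x),y)=B(x,\theta(y))$. *)

theory Defs
  imports Main "HOL.Vector_Spaces"
begin

definition bicharacter :: "('g::ab_group_add \<Rightarrow> 'g \<Rightarrow> 'k::field) \<Rightarrow> bool" where
  "bicharacter eps \<longleftrightarrow>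
     (\<forall>a b. eps a b \<noteq> 0) \<and>
     (\<forall>a b. eps a b * eps b a = 1) \<and>
     (\<forall>a b c. eps a (b + c) = eps a b * eps a c) \<and>
     (\<forall>a b c. eps (a + b) c = eps a c * eps b c)"

definition graded_space :: "('k::field \<Rightarrow> 'v::ab_group_add \<Rightarrow> 'v) \<Rightarrow> ('g \<Rightarrow> 'v set) \<Rightarrow> bool" where
  "graded_space scale G \<longleftrightarrow>
     module scale \<and>
     (\<forall>a. 0 \<in> G a \<and> (\<forall>x\<in>G a. \<forall>y\<in>G a. x + y \<in> G a) \<and> (\<forall>c. \<forall>x\<in>G a. scale c x \<in> G a)) \<and>
     (\<forall>v. \<exists>!c :: 'g \<Rightarrow> 'v. finite {a. c a \<noteq> 0} \<and> (\<forall>a. c a \<in> G a) \<and>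
            v = sum c {a. c a \<noteq> 0})"

definition even_bilinear :: "('k::field \<Rightarrow> 'v::ab_group_add \<Rightarrow> 'v) \<Rightarrow> ('g::ab_group_add \<Rightarrow> 'v set)
    \<Rightarrow> ('v \<Rightarrow> 'v \<Rightarrow> 'v) \<Rightarrow> bool" where
  "even_bilinear scale G br \<longleftrightarrow>
     (\<forall>x. Vector_Spaces.linear scale scale (br x)) \<and>
     (\<forall>y. Vector_Spaces.linear scale scale (\<lambda>x. br x y)) \<and>
     (\<forall>a b x y. x \<in> G a \<longrightarrow> y \<in> G b \<longrightarrow> br x y \<in> G (a + b))"

definition even_linear :: "('k::field \<Rightarrow> 'v::ab_group_add \<Rightarrow> 'v) \<Rightarrow> ('g \<Rightarrow> 'v set)
    \<Rightarrow> ('v \<Rightarrow> 'v) \<Rightarrow> bool" where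
  "even_linear scale G f \<longleftrightarrow>
     Vector_Spaces.linear scale scale f \<and> (\<forall>a x. x \<in> G a \<longrightarrow> f x \<in> G a)"

definition color_hom_lie :: "('k::field \<Rightarrow> 'v::ab_group_add \<Rightarrow> 'v) \<Rightarrow> ('g::ab_group_add \<Rightarrow> 'v set)
    \<Rightarrow> ('v \<Rightarrow> 'v \<Rightarrow> 'v) \<Rightarrow> ('v \<Rightarrow> 'v) \<Rightarrow> ('g \<Rightarrow> 'g \<Rightarrow> 'k) \<Rightarrow> bool" where
  "color_hom_lie scale G br alpha eps \<longleftrightarrow>
     graded_space scale G \<and> bicharacter eps \<and>
     even_bilinear scale G br \<and> even_linear scale G alpha \<and>
     (\<forall>a b x y. x \<in> G a \<longrightarrow> y \<in> G b \<longrightarrow> br x y = - scale (eps a b) (br y x)) \<and>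
     (\<forall>a b c x y z. x \<in> G a \<longrightarrow> y \<in> G b \<longrightarrow> z \<in> G c \<longrightarrow>
        scale (eps c a) (br (alpha x) (br y z)) + scale (eps a b) (br (alpha y) (br z x))
          + scale (eps b c) (br (alpha z) (br x y)) = 0)"

definition color_lie :: "('k::field \<Rightarrow> 'v::ab_group_add \<Rightarrow> 'v) \<Rightarrow> ('g::ab_group_add \<Rightarrow> 'v set)
    \<Rightarrow> ('v \<Rightarrow> 'v \<Rightarrow> 'v) \<Rightarrow> ('g \<Rightarrow> 'g \<Rightarrow> 'k) \<Rightarrow> bool" where
  "color_lie scale G br eps \<longleftrightarrow> color_hom_lie scale G br id eps"

definition quadratic_color_hom_lie :: "('k::field \<Rightarrow> 'v::ab_group_add \<Rightarrow> 'v) \<Rightarrow> ('g::ab_group_add \<Rightarrow> 'v set)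
    \<Rightarrow> ('v \<Rightarrow> 'v \<Rightarrow> 'v) \<Rightarrow> ('v \<Rightarrow> 'v) \<Rightarrow> ('g \<Rightarrow> 'g \<Rightarrow> 'k) \<Rightarrow> ('v \<Rightarrow> 'v \<Rightarrow> 'k) \<Rightarrow> bool" where
  "quadratic_color_hom_lie scale G br alpha eps B \<longleftrightarrow>
     color_hom_lie scale G br alpha eps \<and>
     (\<forall>x. Vector_Spaces.linear scale ((*) :: 'k \<Rightarrow> 'k \<Rightarrow> 'k) (B x)) \<and>
     (\<forall>y. Vector_Spaces.linear scale ((*) :: 'k \<Rightarrow> 'k \<Rightarrow> 'k) (\<lambda>x. B x y)) \<and>
     (\<forall>x. (\<forall>y. B x y = 0) \<longrightarrow> x = 0) \<and>
     (\<forall>a b x y. x \<in> G a \<longrightarrow> y \<in> G b \<longrightarrow> B x y = eps a b * B y x) \<and>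
     (\<forall>x y z. B (br x y) z = B x (br y z)) \<and>
     (\<forall>x y. B (alpha x) y = B x (alpha y))"

definition quadratic_color_lie :: "('k::field \<Rightarrow> 'v::ab_group_add \<Rightarrow> 'v) \<Rightarrow> ('g::ab_group_add \<Rightarrow> 'v set)
    \<Rightarrow> ('v \<Rightarrow> 'v \<Rightarrow> 'v) \<Rightarrow> ('g \<Rightarrow> 'g \<Rightarrow> 'k) \<Rightarrow> ('v \<Rightarrow> 'v \<Rightarrow> 'k) \<Rightarrow> bool" where
  "quadratic_color_lie scale G br eps B \<longleftrightarrow> quadratic_color_hom_lie scale G br id eps B"

definition centroid_hom :: "('k::field \<Rightarrow> 'v::ab_group_add \<Rightarrow> 'v) \<Rightarrow> ('g::ab_group_add \<Rightarrow> 'v set)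
    \<Rightarrow> ('v \<Rightarrow> 'v \<Rightarrow> 'v) \<Rightarrow> ('g \<Rightarrow> 'g \<Rightarrow> 'k) \<Rightarrow> 'g \<Rightarrow> ('v \<Rightarrow> 'v) \<Rightarrow> bool" where
  "centroid_hom scale G br eps d theta \<longleftrightarrow>
     Vector_Spaces.linear scale scale theta \<and>
     (\<forall>a x. x \<in> G a \<longrightarrow> theta x \<in> G (a + d)) \<and>
     (\<forall>a b x y. x \<in> G a \<longrightarrow> y \<in> G b \<longrightarrow>
        theta (br x y) = br (theta x) y \<and> br (theta x) y = scale (eps d a) (br x (theta y)))"

definition even_centroid :: "('k::field \<Rightarrow> 'v::ab_group_add \<Rightarrow> 'v) \<Rightarrow> ('g::ab_group_add \<Rightarrow> 'v set)
    \<Rightarrow> ('v \<Rightarrow> 'v \<Rightarrow> 'v) \<Rightarrow> ('g \<Rightarrow> 'g \<Rightarrow> 'k) \<Rightarrow> ('v \<Rightarrow> 'v) \<Rightarrow> bool" where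
  "even_centroid scale G br eps theta \<longleftrightarrow> centroid_hom scale G br eps 0 theta"

end

theory Submission
  imports Defs
begin

text \<open>Since \<open>\<theta>\<close> is even and \<open>\<epsilon>(0,a) = 1\<close>, the centroid identities read
  \<open>\<theta>[x,y] = [\<theta>x,y] = [x,\<theta>y]\<close> on homogeneous elements and hence, by biadditivity,
  for all \<open>x, y\<close>. Thus \<open>[x,y]\<^sub>1\<^sup>\<theta> = \<theta>[x,y]\<close> and
  \<open>[x,y]\<^sub>2\<^sup>\<theta> = \<theta>\<^sup>2[x,y]\<close>. For any even linear \<open>\<phi>\<close> commuting with the bracket in this
  sense, the \<open>\<alpha>\<close>-twisted Jacobi sum of \<open>\<phi>[\<cdot>,\<cdot>]\<close> is the image of the ordinary Jacobi
  sum under \<open>\<phi>\<^sup>2\<alpha>\<close>, hence vanishes. Invariance of \<open>B\<^sub>\<theta>\<close> follows by moving \<open>\<theta>\<close>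
  and \<open>\<phi>\<close> across \<open>B\<close>, and nondegeneracy of \<open>B\<^sub>\<theta>\<close> from injectivity of \<open>\<theta>\<close>.\<close>

definition commutes_with_bracket :: "('v \<Rightarrow> 'v \<Rightarrow> 'v) \<Rightarrow> ('v \<Rightarrow> 'v) \<Rightarrow> bool" where
  "commutes_with_bracket br \<phi> \<longleftrightarrow> (\<forall>x y. br (\<phi> x) y = \<phi> (br x y) \<and> br x (\<phi> y) = \<phi> (br x y))"

lemma commutes_with_bracket_comp:
  "commutes_with_bracket br \<phi> \<Longrightarrow> commutes_with_bracket br \<psi> \<Longrightarrow> commutes_with_bracket br (\<phi> \<circ> \<psi>)"
  by (simp add: commutes_with_bracket_def)

lemma even_linear_comp:
  "even_linear scale G \<phi> \<Longrightarrow> even_linear scale G \<psi> \<Longrightarrow> even_linear scale G (\<phi> \<circ> \<psi>)"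
  unfolding even_linear_def by (auto intro: Vector_Spaces.linear_compose)

lemma bicharacter_zero_left:
  assumes "bicharacter eps"
  shows "eps 0 a = 1"
proof -
  have "eps (0 + 0) a = eps 0 a * eps 0 a" "eps 0 a \<noteq> 0"
    using assms unfolding bicharacter_def by blast+
  then show ?thesis by simp
qed

lemma graded_space_additive_eq:
  fixes f g :: "'v::ab_group_add \<Rightarrow> 'w::ab_group_add" and G :: "'g \<Rightarrow> 'v set"
  assumes "graded_space scale G"
    and f_add: "\<And>x y. f (x + y) = f x + f y"
    and g_add: "\<And>x y. g (x + y) = g x + g y"
    and homogeneous: "\<And>a x. x \<in> G a \<Longrightarrow> f x = g x"
  shows "f v = g v"
proof -
  obtain c :: "'g \<Rightarrow> 'v"
    where "finite {a. c a \<noteq> 0}" and c: "\<forall>a. c a \<in> G a" and v: "v = sum c {a. c a \<noteq> 0}"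
    using assms(1) unfolding graded_space_def by meson
  have "f (sum c S) = g (sum c S)" if "finite S" for S
    using that
  proof (induction S rule: finite_induct)
    case empty
    show ?case using f_add[of 0 0] g_add[of 0 0] by simp
  next
    case (insert a S)
    then show ?case using homogeneous[of "c a" a] c by (simp add: f_add g_add)
  qed
  then show ?thesis using \<open>finite {a. c a \<noteq> 0}\<close> v by simp
qed

lemma graded_space_biadditive_eq:
  fixes f g :: "'v::ab_group_add \<Rightarrow> 'v \<Rightarrow> 'w::ab_group_add" and G :: "'g \<Rightarrow> 'v set"
  assumes gs: "graded_space scale G"
    and f_add: "\<And>x y z. f (x + y) z = f x z + f y z" "\<And>x y z. f x (y + z) = f x y + f x z"
    and g_add: "\<And>x y z. g (x + y) z = g x z + g y z" "\<And>x y z. g x (y + z) = g x y + g x z"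
    and homogeneous: "\<And>a b x y. x \<in> G a \<Longrightarrow> y \<in> G b \<Longrightarrow> f x y = g x y"
  shows "f u v = g u v"
proof (rule graded_space_additive_eq[OF gs, where f = "\<lambda>x. f x v" and g = "\<lambda>x. g x v"])
  fix a x assume "x \<in> G a"
  then show "f x v = g x v"
    using graded_space_additive_eq[OF gs, where f = "f x" and g = "g x"] f_add(2) g_add(2) homogeneous
    by blast
qed (fact f_add(1) g_add(1))+

lemma linear_additive:
  "Vector_Spaces.linear s1 s2 f \<Longrightarrow> f (x + y) = f x + f y"
  by (simp add: linear_iff)

lemma even_centroid_commutes_with_bracket:
  assumes gs: "graded_space scale G" and "bicharacter eps"
    and br: "even_bilinear scale G br"
    and \<theta>: "even_centroid scale G br eps \<theta>"
  shows "commutes_with_bracket br \<theta>"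
proof -
  have lin: "Vector_Spaces.linear scale scale \<theta>"
    "\<And>x. Vector_Spaces.linear scale scale (br x)"
    "\<And>y. Vector_Spaces.linear scale scale (\<lambda>x. br x y)"
    using \<theta> br unfolding even_centroid_def centroid_hom_def even_bilinear_def by blast+
  note add = lin[THEN linear_additive]
  have "module scale" using gs unfolding graded_space_def by blast
  then have homogeneous: "\<theta> (br x y) = br (\<theta> x) y \<and> br (\<theta> x) y = br x (\<theta> y)"
    if "x \<in> G a" "y \<in> G b" for a b x y
    using \<theta> that bicharacter_zero_left[OF \<open>bicharacter eps\<close>]
    unfolding even_centroid_def centroid_hom_def by (simp add: module.scale_one)
  have "\<theta> (br x y) = br (\<theta> x) y" for x y
    by (rule graded_space_biadditive_eq[OF gs, where f = "\<lambda>x y. \<theta> (br x y)"])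
      (use homogeneous add in auto)
  moreover have "br x (\<theta> y) = br (\<theta> x) y" for x y
    by (rule graded_space_biadditive_eq[OF gs, where f = "\<lambda>x y. br x (\<theta> y)"])
      (use homogeneous add in auto)
  ultimately show ?thesis unfolding commutes_with_bracket_def by simp
qed

lemma color_hom_lieD:
  assumes "color_hom_lie scale G br \<alpha> eps"
  shows "graded_space scale G" "bicharacter eps" "even_bilinear scale G br" "even_linear scale G \<alpha>"
    and color_hom_lie_skew:
      "\<And>a b x y. x \<in> G a \<Longrightarrow> y \<in> G b \<Longrightarrow> br x y = - scale (eps a b) (br y x)"
    and color_hom_lie_jacobi:
      "\<And>a b c x y z. x \<in> G a \<Longrightarrow> y \<in> G b \<Longrightarrow> z \<in> G c \<Longrightarrow>
        scale (eps c a) (br (\<alpha> x) (br y z)) + scale (eps a b) (br (\<alpha> y) (br z x))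
          + scale (eps b c) (br (\<alpha> z) (br x y)) = 0"
  using assms unfolding color_hom_lie_def by blast+

lemma color_hom_lie_twist:
  assumes lie: "color_lie scale G br eps"
    and \<phi>: "even_linear scale G \<phi>" "commutes_with_bracket br \<phi>"
    and \<alpha>: "even_linear scale G \<alpha>" "commutes_with_bracket br \<alpha>"
  shows "color_hom_lie scale G (\<lambda>x y. \<phi> (br x y)) \<alpha> eps"
proof -
  note L = lie[unfolded color_lie_def]
  note br = color_hom_lieD(3)[OF L]
  have \<phi>_lin: "Vector_Spaces.linear scale scale \<phi>" using \<phi> unfolding even_linear_def by blast
  interpret \<phi>: linear scale scale \<phi> by (fact \<phi>_lin)
  interpret \<psi>: linear scale scale "\<phi> \<circ> \<phi> \<circ> \<alpha>"
    using even_linear_comp[OF even_linear_comp[OF \<phi>(1) \<phi>(1)] \<alpha>(1)]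
    unfolding even_linear_def by (elim conjE)
  have "even_bilinear scale G (\<lambda>x y. \<phi> (br x y))"
    unfolding even_bilinear_def
  proof (intro conjI allI impI)
    fix x y
    show "Vector_Spaces.linear scale scale (\<lambda>y. \<phi> (br x y))"
      "Vector_Spaces.linear scale scale (\<lambda>x. \<phi> (br x y))"
      using br Vector_Spaces.linear_compose[OF _ \<phi>_lin]
      unfolding even_bilinear_def comp_def by blast+
  next
    fix a b x y assume "x \<in> G a" "y \<in> G b"
    then show "\<phi> (br x y) \<in> G (a + b)"
      using br \<phi> unfolding even_bilinear_def even_linear_def by blast
  qed
  moreover have "\<phi> (br x y) = - scale (eps a b) (\<phi> (br y x))" if "x \<in> G a" "y \<in> G b" for a b x y
    unfolding color_hom_lie_skew[OF L that] \<phi>.neg \<phi>.scale ..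
  moreover have
    "scale (eps c a) (\<phi> (br (\<alpha> x) (\<phi> (br y z)))) + scale (eps a b) (\<phi> (br (\<alpha> y) (\<phi> (br z x))))
       + scale (eps b c) (\<phi> (br (\<alpha> z) (\<phi> (br x y)))) = 0"
    if "x \<in> G a" "y \<in> G b" "z \<in> G c" for a b c x y z
  proof -
    have twisted: "\<phi> (br (\<alpha> u) (\<phi> (br v w))) = (\<phi> \<circ> \<phi> \<circ> \<alpha>) (br u (br v w))" for u v w
      using \<phi>(2) \<alpha>(2) unfolding commutes_with_bracket_def by simp
    show ?thesis
      using arg_cong[OF color_hom_lie_jacobi[OF L that], of "\<phi> \<circ> \<phi> \<circ> \<alpha>"]
      unfolding twisted id_apply \<psi>.add \<psi>.scale \<psi>.zero .
  qed
  ultimately show ?thesis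
    using color_hom_lieD(1,2)[OF L] \<alpha>(1) unfolding color_hom_lie_def by blast
qed

lemma quadratic_color_lieD:
  assumes "quadratic_color_lie scale G br eps B"
  shows "color_lie scale G br eps"
    and "Vector_Spaces.linear scale (*) (B x)" "Vector_Spaces.linear scale (*) (\<lambda>x. B x y)"
    and "(\<forall>y. B x y = 0) \<Longrightarrow> x = 0"
    and "x \<in> G a \<Longrightarrow> y \<in> G b \<Longrightarrow> B x y = eps a b * B y x"
    and "B (br x y) z = B x (br y z)"
  using assms unfolding quadratic_color_lie_def quadratic_color_hom_lie_def color_lie_def by blast+

lemma quadratic_color_hom_lie_twist:
  assumes quadratic: "quadratic_color_lie scale G br eps B"
    and \<theta>: "even_linear scale G \<theta>" "commutes_with_bracket br \<theta>" "inj \<theta>"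
      "\<forall>x y. B (\<theta> x) y = B x (\<theta> y)"
    and \<phi>: "even_linear scale G \<phi>" "commutes_with_bracket br \<phi>"
      "\<forall>x y. B (\<phi> x) y = B x (\<phi> y)" "\<phi> \<circ> \<theta> = \<theta> \<circ> \<phi>"
  shows "quadratic_color_hom_lie scale G (\<lambda>x y. \<phi> (br x y)) \<theta> eps (\<lambda>x y. B (\<theta> x) y)"
proof -
  note Q = quadratic_color_lieD[OF quadratic]
  have \<theta>_lin: "Vector_Spaces.linear scale scale \<theta>" using \<theta>(1) unfolding even_linear_def by blast
  interpret \<theta>: linear scale scale \<theta> by (fact \<theta>_lin)
  have linear: "Vector_Spaces.linear scale (*) (\<lambda>x. B (\<theta> x) y)" for y
    using Vector_Spaces.linear_compose[OF \<theta>_lin Q(3)] unfolding comp_def .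
  have nondegenerate: "x = 0" if "\<forall>y. B (\<theta> x) y = 0" for x
  proof -
    have "\<theta> x = \<theta> 0" using Q(4) that by simp
    with \<theta>(3) show "x = 0" by (rule injD)
  qed
  have symmetric: "B (\<theta> x) y = eps a b * B (\<theta> y) x" if "x \<in> G a" "y \<in> G b" for a b x y
  proof -
    have "\<theta> x \<in> G a" using that(1) \<theta>(1) unfolding even_linear_def by blast
    then show ?thesis using Q(5) that(2) \<theta>(4) by metis
  qed
  have invariant: "B (\<theta> (\<phi> (br x y))) z = B (\<theta> x) (\<phi> (br y z))" for x y z
  proof -
    have "B (\<theta> x) (\<phi> (br y z)) = B (\<phi> (\<theta> x)) (br y z)" using \<phi>(3) by simp
    also have "\<dots> = B (br (\<phi> (\<theta> x)) y) z" by (rule Q(6)[symmetric])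
    also have "\<dots> = B (\<theta> (\<phi> (br x y))) z"
      using \<phi>(2) \<theta>(2) fun_cong[OF \<phi>(4)] unfolding commutes_with_bracket_def by simp
    finally show ?thesis ..
  qed
  show ?thesis
    unfolding quadratic_color_hom_lie_def
  proof (intro conjI allI impI)
    show "color_hom_lie scale G (\<lambda>x y. \<phi> (br x y)) \<theta> eps"
      by (rule color_hom_lie_twist[OF Q(1) \<phi>(1,2) \<theta>(1,2)])
    show "B (\<theta> (\<theta> x)) y = B (\<theta> x) (\<theta> y)" for x y
      using \<theta>(4) by blast
  qed (fact Q(2) linear symmetric invariant nondegenerate)+
qed

theorem mainTheorem4:
  fixes scale :: "'k::field_char_0 \<Rightarrow> 'v::ab_group_add \<Rightarrow> 'v"
    and G :: "'g::ab_group_add \<Rightarrow> 'v set"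
    and br :: "'v \<Rightarrow> 'v \<Rightarrow> 'v"
    and eps :: "'g \<Rightarrow> 'g \<Rightarrow> 'k"
    and B :: "'v \<Rightarrow> 'v \<Rightarrow> 'k"
    and theta :: "'v \<Rightarrow> 'v"
  assumes "quadratic_color_lie scale G br eps B"
    and "even_centroid scale G br eps theta"
    and "bij theta"
    and "\<forall>x y. B (theta x) y = B x (theta y)"
  shows "quadratic_color_hom_lie scale G (\<lambda>x y. br (theta x) y) theta eps (\<lambda>x y. B (theta x) y)
       \<and> quadratic_color_hom_lie scale G (\<lambda>x y. br (theta x) (theta y)) theta eps (\<lambda>x y. B (theta x) y)"
proof -
  have lie: "color_hom_lie scale G br id eps"
    using quadratic_color_lieD(1)[OF assms(1)] unfolding color_lie_def .
  have even: "even_linear scale G theta"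
    using assms(2) unfolding even_centroid_def centroid_hom_def even_linear_def by simp
  have commutes: "commutes_with_bracket br theta"
    using even_centroid_commutes_with_bracket color_hom_lieD(1-3)[OF lie] assms(2) by blast
  have square_symmetric: "\<forall>x y. B ((theta \<circ> theta) x) y = B x ((theta \<circ> theta) y)"
    using assms(4) by simp
  note twist = quadratic_color_hom_lie_twist[OF assms(1) even commutes bij_is_inj[OF assms(3)] assms(4)]
  have "(\<lambda>x y. br (theta x) y) = (\<lambda>x y. theta (br x y))"
    "(\<lambda>x y. br (theta x) (theta y)) = (\<lambda>x y. (theta \<circ> theta) (br x y))"
    using commutes unfolding commutes_with_bracket_def by simp_all
  moreover have "quadratic_color_hom_lie scale G (\<lambda>x y. theta (br x y)) theta eps (\<lambda>x y. B (theta x) y)"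
    by (rule twist[OF even commutes assms(4) refl])
  moreover have
    "quadratic_color_hom_lie scale G (\<lambda>x y. (theta \<circ> theta) (br x y)) theta eps (\<lambda>x y. B (theta x) y)"
    by (rule twist[OF even_linear_comp[OF even even] commutes_with_bracket_comp[OF commutes commutes]
          square_symmetric comp_assoc])
  ultimately show ?thesis by simp
qed

end
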